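(* Let $\Phi$ be the root system of type $A_{n-1}$ and let $d\le n$ be a positive integer. Then \[ \operatorname{Var}(\mathcal{X}_{\Phi^+_{=d}})=\begin{cases}\frac{1}{12}(n+d) & \text{if } 2d\le n,\\ \frac14(n-d) & \text{if } 2d\ge n,\end{cases} \] \[ \operatorname{Var}(\mathcal{X}_{\Phi^+_{\le d}})=\begin{cases}\frac{1}{18}d^3+\frac1{24}d^2+(\frac1{12}n-\frac1{72})d & \text{if } 2d\le n,\\ -\frac16 d^3+(\frac13 n-\frac7{24})d^2+(-\frac16 n^2+\frac5{12}n-\frac18)d+(\frac1{36}n^3-\frac1{12}n^2+\frac1{18}n) & \text{if } 2d\ge n.\end{cases} \]
   Context: Type $A_{n-1}$ is realized in $\mathbb{R}^n$ with standard basis $e_1,\dots,e_n$: simple roots $e_{i+1}-e_i$ ($1\le i<n$), positive roots $e_j-e_i$ ($1\le i<j\le n$), all roots $e_j-e_i$ ($i\ne j$); the height of $e_j-e_i$ is $j-i$. The Weyl group $W$ is the symmetric group $\mathcal{S}_n$ permuting coordinates. $\Phi^+_{=d}$ (resp. $\Phi^+_{\le d}$) is the set of positive roots of height exactly $d$ (resp. at most $d$). For $\beta\in\Phi^+$, $\mathcal{X}_\beta$ is the Bernoulli random variable on $W$ (uniform) with $\mathcal{X}_\beta(w)=1$ if $w(\beta)$ is a negative root and $0$ otherwise; $\mathcal{X}_\Psi=\sum_{\beta\in\Psi}\mathcal{X}_\beta$. *)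

theory Defs
  imports "HOL-Probability.Probability" "HOL-Combinatorics.Permutations"
begin

text \<open>The positive root e_j - e_i (1 <= i < j <= n) is encoded
  by the pair (i, j); its height is j - i.  The Weyl group is the symmetric group on
  {1..n}, acting by permuting coordinates, so w(e_j - e_i) = e_(w j) - e_(w i), which is a
  negative root iff w j < w i.\<close>

definition pos_roots :: "nat \<Rightarrow> (nat \<times> nat) set" where
  "pos_roots n = {(i, j). 1 \<le> i \<and> i < j \<and> j \<le> n}"

definition height :: "nat \<times> nat \<Rightarrow> nat" where
  "height \<beta> = snd \<beta> - fst \<beta>"

definition pos_roots_eq :: "nat \<Rightarrow> nat \<Rightarrow> (nat \<times> nat) set" where
  "pos_roots_eq n d = {\<beta> \<in> pos_roots n. height \<beta> = d}"

definition pos_roots_le :: "nat \<Rightarrow> nat \<Rightarrow> (nat \<times> nat) set" where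
  "pos_roots_le n d = {\<beta> \<in> pos_roots n. height \<beta> \<le> d}"

definition weyl_group :: "nat \<Rightarrow> (nat \<Rightarrow> nat) set" where
  "weyl_group n = {w. w permutes {1..n}}"

definition X_root :: "nat \<times> nat \<Rightarrow> (nat \<Rightarrow> nat) \<Rightarrow> real" where
  "X_root \<beta> w = (if w (snd \<beta>) < w (fst \<beta>) then 1 else 0)"

definition X_set :: "(nat \<times> nat) set \<Rightarrow> (nat \<Rightarrow> nat) \<Rightarrow> real" where
  "X_set \<Psi> w = (\<Sum>\<beta>\<in>\<Psi>. X_root \<beta> w)"

definition var_W :: "nat \<Rightarrow> ((nat \<Rightarrow> nat) \<Rightarrow> real) \<Rightarrow> real" where
  "var_W n X = measure_pmf.variance (pmf_of_set (weyl_group n)) X"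

end

theory Submission
  imports Defs
begin

(* Identify the positive root (i, j) with the vector e_j - e_i.  Under a uniform permutation w
   the centred indicators X_beta - 1/2 have covariance (delta_beta_gamma + <beta, gamma>) / 12:
   the product X_beta X_gamma only depends on the relative order of the at most four values
   w i, w j, w k, w l, and every order is equally likely since composing w with a
   transposition permutes these orders.  Summing over Psi gives
   Var X_Psi = (|Psi| + |sum of the roots in Psi|^2) / 12.  The v-th coordinate of that sum is
   the number of roots of Psi ending at v minus the number starting at v, which for heights = d
   is an indicator difference and for heights <= d is min (v - 1) d - min (n - v) d; summing
   its square over v is piecewise polynomial with breakpoints d and n - d, which explains the
   two regimes 2 d <= n and 2 d >= n. *)

lemma sum_of_bool_eq_mult_of_bool_eq:
  assumes "finite A" "x \<in> A"
  shows "(\<Sum>v\<in>A. of_bool (v = x) * of_bool (v = y)) = (of_bool (x = y) :: real)"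
  using assms by (simp add: of_bool_def if_distrib[of "\<lambda>t. t * _"] sum.delta cong: if_cong)

lemma sum_greaterThanAtMost_split:
  assumes "l \<le> m" "m \<le> (u::nat)"
  shows "sum f {l<..u} = sum f {l<..m} + sum f {m<..u}"
  by (simp add: ivl_disj_un_two(6)[OF assms, symmetric] sum.union_disjoint ivl_disj_int_two(6))

lemma sum_greaterThanAtMost_split3:
  assumes "l \<le> m" "m \<le> m'" "m' \<le> (u::nat)"
  shows "sum f {l<..u} = sum f {l<..m} + sum f {m<..m'} + sum f {m'<..u}"
  using assms sum_greaterThanAtMost_split[of l m u f] sum_greaterThanAtMost_split[of m m' u f]
  by (simp add: add.assoc)

definition affine_square_sum :: "real \<Rightarrow> real \<Rightarrow> real \<Rightarrow> real" where
  "affine_square_sum p q x = p\<^sup>2 * x * (x + 1) * (2 * x + 1) / 6 + p * q * x * (x + 1) + q\<^sup>2 * x"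

lemma sum_affine_square:
  assumes "a \<le> b" "\<And>v. v \<in> {a<..b} \<Longrightarrow> f v = p * real v + q"
  shows "(\<Sum>v\<in>{a<..b}. (f v)\<^sup>2) = affine_square_sum p q (real b) - affine_square_sum p q (real a)"
proof -
  have "(\<Sum>v\<in>{a<..b}. (p * real v + q)\<^sup>2)
      = affine_square_sum p q (real b) - affine_square_sum p q (real a)"
    using assms(1)
  proof (induction b rule: dec_induct)
    case (step b)
    then have "{a<..Suc b} = insert (Suc b) {a<..b}"
      by auto
    with step show ?case
      by (simp add: affine_square_sum_def field_simps power2_eq_square)
  qed simp
  moreover have "(\<Sum>v\<in>{a<..b}. (f v)\<^sup>2) = (\<Sum>v\<in>{a<..b}. (p * real v + q)\<^sup>2)"
    using assms(2) by simp
  ultimately show ?thesis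
    by simp
qed

lemma sum_permutes_compose_transpose:
  assumes "a \<in> S" "b \<in> S"
  shows "(\<Sum>w | w permutes S. f w) = (\<Sum>w | w permutes S. f (w \<circ> Transposition.transpose a b))"
  by (rule sum_permutations_compose_right[OF permutes_swap_id[OF assms]])

lemma sum_permutes_less:
  fixes S :: "'a::linorder set"
  assumes "a \<in> S" "b \<in> S" "a \<noteq> b"
  shows "(\<Sum>w | w permutes S. of_bool (w a < w b)) = real (card {w. w permutes S}) / 2"
proof -
  have "(\<Sum>w | w permutes S. of_bool (w a < w b)) = (\<Sum>w | w permutes S. of_bool (w b < w a) :: real)"
    using sum_permutes_compose_transpose[OF assms(1,2), of "\<lambda>w. of_bool (w a < w b)"] by simp
  moreover have "(\<Sum>w | w permutes S. of_bool (w a < w b) + of_bool (w b < w a))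
      = (\<Sum>w | w permutes S. 1 :: real)"
    using assms(3) by (intro sum.cong) (auto dest!: permutes_inj simp: inj_eq not_less le_less)
  ultimately show ?thesis
    by (simp add: sum.distrib)
qed

lemma sum_permutes_max3:
  fixes S :: "'a::linorder set"
  assumes "a \<in> S" "b \<in> S" "c \<in> S" "distinct [a, b, c]"
  shows "(\<Sum>w | w permutes S. of_bool (w b < w a \<and> w c < w a)) = real (card {w. w permutes S}) / 3"
proof -
  let ?M = "\<lambda>a b c. (\<Sum>w | w permutes S. of_bool (w b < w a \<and> w c < w a) :: real)"
  have "?M a b c = ?M b a c"
    using sum_permutes_compose_transpose[OF assms(1,2), of "\<lambda>w. of_bool (w b < w a \<and> w c < w a)"]
      assms(4)
    by auto
  moreover have "?M a b c = ?M c b a"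
    using sum_permutes_compose_transpose[OF assms(1,3), of "\<lambda>w. of_bool (w b < w a \<and> w c < w a)"]
      assms(4)
    by (auto simp: conj_commute)
  moreover have "(\<Sum>w | w permutes S. of_bool (w b < w a \<and> w c < w a)
      + of_bool (w a < w b \<and> w c < w b) + of_bool (w b < w c \<and> w a < w c))
      = (\<Sum>w | w permutes S. 1 :: real)"
    using assms(4) by (intro sum.cong) (auto dest!: permutes_inj simp: inj_eq not_less le_less)
  ultimately show ?thesis
    by (simp add: sum.distrib)
qed

lemma sum_permutes_min3:
  fixes S :: "'a::linorder set"
  assumes "a \<in> S" "b \<in> S" "c \<in> S" "distinct [a, b, c]"
  shows "(\<Sum>w | w permutes S. of_bool (w a < w b \<and> w a < w c)) = real (card {w. w permutes S}) / 3"
proof -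
  have "(\<Sum>w | w permutes S. of_bool (w a < w b \<and> w a < w c)) = (\<Sum>w | w permutes S. 1
      - of_bool (w b < w a) - of_bool (w c < w a) + of_bool (w b < w a \<and> w c < w a) :: real)"
    using assms(4) by (intro sum.cong) (auto dest!: permutes_inj simp: inj_eq not_less le_less)
  moreover have "b \<noteq> a" "c \<noteq> a"
    using assms(4) by auto
  ultimately show ?thesis
    using sum_permutes_less[OF assms(2,1)] sum_permutes_less[OF assms(3,1)]
      sum_permutes_max3[OF assms]
    by (simp add: sum.distrib sum_subtractf)
qed

lemma sum_permutes_chain3:
  fixes S :: "'a::linorder set"
  assumes "a \<in> S" "b \<in> S" "c \<in> S" "distinct [a, b, c]"
  shows "(\<Sum>w | w permutes S. of_bool (w c < w b \<and> w b < w a)) = real (card {w. w permutes S}) / 6"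
proof -
  let ?T = "\<lambda>b c. (\<Sum>w | w permutes S. of_bool (w c < w b \<and> w b < w a) :: real)"
  have "?T b c = ?T c b"
    using sum_permutes_compose_transpose[OF assms(2,3), of "\<lambda>w. of_bool (w c < w b \<and> w b < w a)"]
      assms(4)
    by auto
  moreover have "(\<Sum>w | w permutes S. of_bool (w c < w b \<and> w b < w a)
      + of_bool (w b < w c \<and> w c < w a))
      = (\<Sum>w | w permutes S. of_bool (w b < w a \<and> w c < w a) :: real)"
    using assms(4) by (intro sum.cong) (auto dest!: permutes_inj simp: inj_eq not_less le_less)
  ultimately show ?thesis
    using sum_permutes_max3[OF assms] by (simp add: sum.distrib)
qed

lemma sum_permutes_less_disjoint:
  fixes S :: "'a::linorder set"
  assumes "a \<in> S" "b \<in> S" "c \<in> S" "e \<in> S" "distinct [a, b, c, e]"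
  shows "(\<Sum>w | w permutes S. of_bool (w a < w b \<and> w c < w e)) = real (card {w. w permutes S}) / 4"
proof -
  have "(\<Sum>w | w permutes S. of_bool (w a < w b \<and> w c < w e))
      = (\<Sum>w | w permutes S. of_bool (w b < w a \<and> w c < w e) :: real)"
    using sum_permutes_compose_transpose[OF assms(1,2), of "\<lambda>w. of_bool (w a < w b \<and> w c < w e)"]
      assms(5)
    by auto
  moreover have "(\<Sum>w | w permutes S. of_bool (w a < w b \<and> w c < w e)
      + of_bool (w b < w a \<and> w c < w e))
      = (\<Sum>w | w permutes S. of_bool (w c < w e) :: real)"
    using assms(5) by (intro sum.cong) (auto dest!: permutes_inj simp: inj_eq not_less le_less)
  ultimately show ?thesis
    using sum_permutes_less[OF assms(3,4)] assms(5) by (simp add: sum.distrib)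
qed

definition root_vec :: "nat \<times> nat \<Rightarrow> nat \<Rightarrow> real" where
  "root_vec \<beta> v = of_bool (v = snd \<beta>) - of_bool (v = fst \<beta>)"

lemma pos_roots_iff: "(i, j) \<in> pos_roots n \<longleftrightarrow> 1 \<le> i \<and> i < j \<and> j \<le> n"
  by (simp add: pos_roots_def)

lemma finite_pos_roots: "finite (pos_roots n)"
  by (rule finite_subset[of _ "{1..n} \<times> {1..n}"]) (auto simp: pos_roots_def)

lemma X_root_Pair: "X_root (i, j) w = of_bool (w j < w i)"
  by (simp add: X_root_def)

lemma inner_root_vec:
  assumes "(i, j) \<in> pos_roots n" "(k, l) \<in> pos_roots n"
  shows "(\<Sum>v\<in>{1..n}. root_vec (i, j) v * root_vec (k, l) v)
      = of_bool (j = l) - of_bool (j = k) - of_bool (i = l) + of_bool (i = k)"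
proof -
  have "i \<in> {1..n}" "j \<in> {1..n}"
    using assms(1) by (auto simp: pos_roots_iff)
  then show ?thesis
    by (simp add: root_vec_def algebra_simps sum.distrib sum_subtractf
        sum_of_bool_eq_mult_of_bool_eq)
qed

lemma sum_X_root:
  assumes "\<beta> \<in> pos_roots n"
  shows "(\<Sum>w\<in>weyl_group n. X_root \<beta> w) = real (card (weyl_group n)) / 2"
  using assms sum_permutes_less[of "snd \<beta>" "{1..n}" "fst \<beta>"]
  by (cases \<beta>) (simp add: weyl_group_def X_root_Pair pos_roots_iff)

lemma sum_X_root_mult:
  assumes "\<beta> \<in> pos_roots n" "\<gamma> \<in> pos_roots n"
  shows "(\<Sum>w\<in>weyl_group n. X_root \<beta> w * X_root \<gamma> w) = real (card (weyl_group n)) / 4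
     + real (card (weyl_group n)) / 12
       * (of_bool (\<beta> = \<gamma>) + (\<Sum>v\<in>{1..n}. root_vec \<beta> v * root_vec \<gamma> v))"
proof -
  obtain i j k l where \<beta>: "\<beta> = (i, j)" and \<gamma>: "\<gamma> = (k, l)"
    by (cases \<beta>, cases \<gamma>) auto
  have ij: "i \<in> {1..n}" "j \<in> {1..n}" "i < j" and kl: "k \<in> {1..n}" "l \<in> {1..n}" "k < l"
    using assms by (auto simp: \<beta> \<gamma> pos_roots_iff)
  have "(\<Sum>w\<in>weyl_group n. X_root \<beta> w * X_root \<gamma> w)
      = (\<Sum>w | w permutes {1..n}. of_bool (w j < w i \<and> w l < w k))"
    by (simp add: weyl_group_def X_root_Pair of_bool_conj \<beta> \<gamma>)
  moreover note inner_root_vec[OF assms[unfolded \<beta> \<gamma>]]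
  moreover consider "i = k" "j = l" | "i = k" "j \<noteq> l" | "i \<noteq> k" "j = l" | "j = k" | "i = l"
    | "distinct [i, j, k, l]"
    using ij kl by fastforce
  then have "(\<Sum>w | w permutes {1..n}. of_bool (w j < w i \<and> w l < w k))
      = real (card (weyl_group n)) / 4 + real (card (weyl_group n)) / 12 *
        (of_bool (\<beta> = \<gamma>) + (of_bool (j = l) - of_bool (j = k) - of_bool (i = l) + of_bool (i = k)))"
  proof cases
    case 1
    then show ?thesis
      using sum_permutes_less[of j "{1..n}" i] ij by (simp add: \<beta> \<gamma> weyl_group_def)
  next
    case 2
    then show ?thesis
      using sum_permutes_max3[of i "{1..n}" j l] ij kl by (simp add: \<beta> \<gamma> weyl_group_def)
  next
    case 3
    then show ?thesis
      using sum_permutes_min3[of j "{1..n}" i k] ij kl by (simp add: \<beta> \<gamma> weyl_group_def)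
  next
    case 4
    then show ?thesis
      using sum_permutes_chain3[of i "{1..n}" j l] ij kl
      by (simp add: \<beta> \<gamma> weyl_group_def conj_commute)
  next
    case 5
    then show ?thesis
      using sum_permutes_chain3[of k "{1..n}" i j] ij kl by (simp add: \<beta> \<gamma> weyl_group_def)
  next
    case 6
    then show ?thesis
      using sum_permutes_less_disjoint[of j "{1..n}" i l k] ij kl by (simp add: \<beta> \<gamma> weyl_group_def)
  qed
  ultimately show ?thesis
    by (simp add: \<beta> \<gamma>)
qed

lemma finite_weyl_group: "finite (weyl_group n)"
  unfolding weyl_group_def by (rule finite_permutations) simp

lemma weyl_group_nonempty: "weyl_group n \<noteq> {}"
  unfolding weyl_group_def using permutes_id by blast

lemma sum_centered_X_root_mult:
  assumes "\<beta> \<in> pos_roots n" "\<gamma> \<in> pos_roots n"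
  shows "(\<Sum>w\<in>weyl_group n. (X_root \<beta> w - 1/2) * (X_root \<gamma> w - 1/2))
      = real (card (weyl_group n)) / 12
        * (of_bool (\<beta> = \<gamma>) + (\<Sum>v\<in>{1..n}. root_vec \<beta> v * root_vec \<gamma> v))"
proof -
  have "(\<Sum>w\<in>weyl_group n. (X_root \<beta> w - 1/2) * (X_root \<gamma> w - 1/2))
      = (\<Sum>w\<in>weyl_group n. X_root \<beta> w * X_root \<gamma> w) - (\<Sum>w\<in>weyl_group n. X_root \<beta> w) / 2
        - (\<Sum>w\<in>weyl_group n. X_root \<gamma> w) / 2 + real (card (weyl_group n)) / 4"
    by (simp add: algebra_simps sum.distrib sum_subtractf sum_divide_distrib)
  then show ?thesis
    using sum_X_root_mult[OF assms] sum_X_root[OF assms(1)] sum_X_root[OF assms(2)] by simp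
qed

lemma var_W_X_set:
  assumes "\<Psi> \<subseteq> pos_roots n"
  shows "var_W n (X_set \<Psi>) = (real (card \<Psi>) + (\<Sum>v\<in>{1..n}. (\<Sum>\<beta>\<in>\<Psi>. root_vec \<beta> v)\<^sup>2)) / 12"
proof -
  let ?W = "weyl_group n"
  let ?N = "real (card ?W)"
  have "finite \<Psi>"
    using assms finite_pos_roots finite_subset by blast
  have "?N > 0"
    using finite_weyl_group weyl_group_nonempty by (simp add: card_gt_0_iff)
  have mean: "measure_pmf.expectation (pmf_of_set ?W) (X_set \<Psi>) = real (card \<Psi>) / 2"
  proof -
    have "(\<Sum>w\<in>?W. X_set \<Psi> w) = (\<Sum>\<beta>\<in>\<Psi>. \<Sum>w\<in>?W. X_root \<beta> w)"
      unfolding X_set_def by (rule sum.swap)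
    also have "\<dots> = (\<Sum>\<beta>\<in>\<Psi>. ?N / 2)"
      using assms sum_X_root by (intro sum.cong) auto
    finally show ?thesis
      using \<open>?N > 0\<close> by (simp add: integral_pmf_of_set[OF weyl_group_nonempty finite_weyl_group])
  qed
  have centered: "X_set \<Psi> w - real (card \<Psi>) / 2 = (\<Sum>\<beta>\<in>\<Psi>. X_root \<beta> w - 1/2)" for w
    by (simp add: X_set_def sum_subtractf)
  have "var_W n (X_set \<Psi>) = (\<Sum>w\<in>?W. (X_set \<Psi> w - real (card \<Psi>) / 2)\<^sup>2) / ?N"
    unfolding var_W_def mean by (rule integral_pmf_of_set[OF weyl_group_nonempty finite_weyl_group])
  also have "(\<Sum>w\<in>?W. (X_set \<Psi> w - real (card \<Psi>) / 2)\<^sup>2)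
      = (\<Sum>w\<in>?W. \<Sum>\<beta>\<in>\<Psi>. \<Sum>\<gamma>\<in>\<Psi>. (X_root \<beta> w - 1/2) * (X_root \<gamma> w - 1/2))"
    unfolding centered by (simp add: power2_eq_square sum_product)
  also have "\<dots> = (\<Sum>\<beta>\<in>\<Psi>. \<Sum>\<gamma>\<in>\<Psi>. \<Sum>w\<in>?W. (X_root \<beta> w - 1/2) * (X_root \<gamma> w - 1/2))"
    by (subst sum.swap) (simp add: sum.swap[of _ ?W])
  also have "\<dots> = (\<Sum>\<beta>\<in>\<Psi>. \<Sum>\<gamma>\<in>\<Psi>.
      ?N / 12 * (of_bool (\<beta> = \<gamma>) + (\<Sum>v\<in>{1..n}. root_vec \<beta> v * root_vec \<gamma> v)))"
    using assms by (intro sum.cong refl sum_centered_X_root_mult) auto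
  also have "\<dots> = ?N / 12 * ((\<Sum>\<beta>\<in>\<Psi>. \<Sum>\<gamma>\<in>\<Psi>. of_bool (\<beta> = \<gamma>))
      + (\<Sum>\<beta>\<in>\<Psi>. \<Sum>\<gamma>\<in>\<Psi>. \<Sum>v\<in>{1..n}. root_vec \<beta> v * root_vec \<gamma> v))"
    by (simp only: sum_distrib_left[symmetric] sum.distrib[symmetric])
  also have "(\<Sum>\<beta>\<in>\<Psi>. \<Sum>\<gamma>\<in>\<Psi>. of_bool (\<beta> = \<gamma>)) = real (card \<Psi>)"
    using \<open>finite \<Psi>\<close> by simp
  also have "(\<Sum>\<beta>\<in>\<Psi>. \<Sum>\<gamma>\<in>\<Psi>. \<Sum>v\<in>{1..n}. root_vec \<beta> v * root_vec \<gamma> v)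
      = (\<Sum>v\<in>{1..n}. (\<Sum>\<beta>\<in>\<Psi>. root_vec \<beta> v)\<^sup>2)"
  proof -
    have "(\<Sum>\<beta>\<in>\<Psi>. \<Sum>\<gamma>\<in>\<Psi>. \<Sum>v\<in>{1..n}. root_vec \<beta> v * root_vec \<gamma> v)
        = (\<Sum>\<beta>\<in>\<Psi>. \<Sum>v\<in>{1..n}. \<Sum>\<gamma>\<in>\<Psi>. root_vec \<beta> v * root_vec \<gamma> v)"
      by (intro sum.cong refl sum.swap)
    also have "\<dots> = (\<Sum>v\<in>{1..n}. \<Sum>\<beta>\<in>\<Psi>. \<Sum>\<gamma>\<in>\<Psi>. root_vec \<beta> v * root_vec \<gamma> v)"
      by (rule sum.swap)
    finally show ?thesis
      by (simp add: power2_eq_square sum_product)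
  qed
  finally show ?thesis
    using \<open>?N > 0\<close> by simp
qed

lemma sum_root_vec:
  assumes "finite \<Psi>"
  shows "(\<Sum>\<beta>\<in>\<Psi>. root_vec \<beta> v) = real (card {\<beta>\<in>\<Psi>. snd \<beta> = v}) - real (card {\<beta>\<in>\<Psi>. fst \<beta> = v})"
  using assms by (simp add: root_vec_def sum_subtractf Int_def eq_commute)

lemma pos_roots_eq_subset: "pos_roots_eq n d \<subseteq> pos_roots n"
  by (auto simp: pos_roots_eq_def)

lemma pos_roots_le_subset: "pos_roots_le n d \<subseteq> pos_roots n"
  by (auto simp: pos_roots_le_def)

lemma finite_pos_roots_eq: "finite (pos_roots_eq n d)"
  using pos_roots_eq_subset finite_pos_roots by (rule finite_subset)

lemma finite_pos_roots_le: "finite (pos_roots_le n d)"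
  using pos_roots_le_subset finite_pos_roots by (rule finite_subset)

lemma sum_root_vec_pos_roots_eq:
  assumes "1 \<le> d" "v \<in> {1..n}"
  shows "(\<Sum>\<beta>\<in>pos_roots_eq n d. root_vec \<beta> v) = of_bool (d < v) - of_bool (v + d \<le> n)"
proof -
  have "{\<beta>\<in>pos_roots_eq n d. snd \<beta> = v} = (if d < v then {(v - d, v)} else {})"
    "{\<beta>\<in>pos_roots_eq n d. fst \<beta> = v} = (if v + d \<le> n then {(v, v + d)} else {})"
    using assms by (auto simp: pos_roots_eq_def pos_roots_def height_def)
  then show ?thesis
    by (simp add: sum_root_vec finite_pos_roots_eq)
qed

lemma sum_root_vec_pos_roots_le:
  assumes "v \<in> {1..n}"
  shows "(\<Sum>\<beta>\<in>pos_roots_le n d. root_vec \<beta> v) = real (min (v - 1) d) - real (min (n - v) d)"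
proof -
  have "{\<beta>\<in>pos_roots_le n d. snd \<beta> = v} = (\<lambda>i. (i, v)) ` {v - min (v - 1) d..<v}"
    "{\<beta>\<in>pos_roots_le n d. fst \<beta> = v} = (\<lambda>j. (v, j)) ` {v<..v + min (n - v) d}"
    using assms by (auto simp: pos_roots_le_def pos_roots_def height_def image_iff)
  then show ?thesis
    using assms by (simp add: sum_root_vec finite_pos_roots_le card_image inj_on_def)
qed

lemma card_pos_roots_eq:
  assumes "1 \<le> d"
  shows "card (pos_roots_eq n d) = n - d"
proof -
  have "pos_roots_eq n d = (\<lambda>i. (i, i + d)) ` {1..n - d}"
    using assms by (auto simp: pos_roots_eq_def pos_roots_def height_def image_iff)
  then show ?thesis
    by (simp add: card_image inj_on_def)
qed

lemma card_pos_roots_le: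
  assumes "d \<le> n"
  shows "real (card (pos_roots_le n d)) = real n * real d - real d * (real d + 1) / 2"
  using assms
proof (induction d)
  case 0
  have "pos_roots_le n 0 = {}"
    by (auto simp: pos_roots_le_def pos_roots_def height_def)
  then show ?case
    by simp
next
  case (Suc d)
  have "pos_roots_le n (Suc d) = pos_roots_le n d \<union> pos_roots_eq n (Suc d)"
    "pos_roots_le n d \<inter> pos_roots_eq n (Suc d) = {}"
    by (auto simp: pos_roots_le_def pos_roots_eq_def)
  then have "card (pos_roots_le n (Suc d)) = card (pos_roots_le n d) + (n - Suc d)"
    by (simp add: card_Un_disjoint finite_pos_roots_le finite_pos_roots_eq card_pos_roots_eq)
  then have "real (card (pos_roots_le n (Suc d)))
      = real (card (pos_roots_le n d)) + real n - real (Suc d)"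
    using Suc.prems by (simp add: of_nat_diff)
  then show ?case
    using Suc by (simp add: field_simps)
qed

(* Truncated subtraction: the term n - 2 * d vanishes when n \<le> 2 * d. *)
lemma var_pos_roots_eq:
  assumes "1 \<le> d" "d \<le> n"
  shows "var_W n (X_set (pos_roots_eq n d)) = (3 * real (n - d) - 2 * real (n - 2 * d)) / 12"
proof -
  have "(\<Sum>v\<in>{1..n}. (\<Sum>\<beta>\<in>pos_roots_eq n d. root_vec \<beta> v)\<^sup>2)
      = (\<Sum>v\<in>{1..n}. of_bool (d < v) + of_bool (v + d \<le> n) - 2 * of_bool (d < v \<and> v + d \<le> n))"
    using assms(1) by (intro sum.cong) (simp_all add: sum_root_vec_pos_roots_eq)
  also have "\<dots> = real (card {d<..n}) + real (card {1..n - d}) - 2 * real (card {d<..n - d})"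
  proof -
    have "{1..n} \<inter> {v. d < v} = {d<..n}" "{1..n} \<inter> {v. v + d \<le> n} = {1..n - d}"
      "{1..n} \<inter> {v. d < v \<and> v + d \<le> n} = {d<..n - d}"
      using assms by auto
    then show ?thesis
      by (simp add: sum.distrib sum_subtractf sum_distrib_left[symmetric])
  qed
  finally show ?thesis
    using assms by (simp add: var_W_X_set[OF pos_roots_eq_subset] card_pos_roots_eq)
qed

lemma var_pos_roots_le:
  assumes "d \<le> n"
  shows "var_W n (X_set (pos_roots_le n d)) = (real n * real d - real d * (real d + 1) / 2
      + (\<Sum>v\<in>{0<..n}. (real (min (v - 1) d) - real (min (n - v) d))\<^sup>2)) / 12"
  using assms
  by (simp add: var_W_X_set[OF pos_roots_le_subset] card_pos_roots_le sum_root_vec_pos_roots_le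
      atLeastSucAtMost_greaterThanAtMost[symmetric])

lemma var_pos_roots_le_short:
  assumes "2 * d \<le> n"
  shows "var_W n (X_set (pos_roots_le n d)) =
    (1/18) * real d ^ 3 + (1/24) * real d ^ 2 + ((1/12) * real n - 1/72) * real d"
proof -
  let ?D = "\<lambda>v. real (min (v - 1) d) - real (min (n - v) d)"
  have "(\<Sum>v\<in>{0<..n}. (?D v)\<^sup>2)
      = (\<Sum>v\<in>{0<..d}. (?D v)\<^sup>2) + (\<Sum>v\<in>{d<..n - d}. (?D v)\<^sup>2) + (\<Sum>v\<in>{n - d<..n}. (?D v)\<^sup>2)"
    by (rule sum_greaterThanAtMost_split3) (use assms in auto)
  also have "(\<Sum>v\<in>{0<..d}. (?D v)\<^sup>2)
      = affine_square_sum 1 (- real d - 1) (real d) - affine_square_sum 1 (- real d - 1) (real 0)"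
    by (rule sum_affine_square) (use assms in \<open>auto simp: of_nat_diff\<close>)
  also have "(\<Sum>v\<in>{d<..n - d}. (?D v)\<^sup>2)
      = affine_square_sum 0 0 (real (n - d)) - affine_square_sum 0 0 (real d)"
    by (rule sum_affine_square) (use assms in auto)
  also have "(\<Sum>v\<in>{n - d<..n}. (?D v)\<^sup>2)
      = affine_square_sum 1 (real d - real n) (real n)
        - affine_square_sum 1 (real d - real n) (real (n - d))"
    by (rule sum_affine_square) (use assms in \<open>auto simp: of_nat_diff\<close>)
  finally show ?thesis
    using assms
    by (simp add: var_pos_roots_le affine_square_sum_def of_nat_diff field_simps
        power2_eq_square power3_eq_cube)
qed

lemma var_pos_roots_le_long:
  assumes "d \<le> n" "n \<le> 2 * d"
  shows "var_W n (X_set (pos_roots_le n d)) =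
    - (1/6) * real d ^ 3 + ((1/3) * real n - 7/24) * real d ^ 2
    + (- (1/6) * real n ^ 2 + (5/12) * real n - 1/8) * real d
    + ((1/36) * real n ^ 3 - (1/12) * real n ^ 2 + (1/18) * real n)"
proof -
  let ?D = "\<lambda>v. real (min (v - 1) d) - real (min (n - v) d)"
  have "(\<Sum>v\<in>{0<..n}. (?D v)\<^sup>2)
      = (\<Sum>v\<in>{0<..n - d}. (?D v)\<^sup>2) + (\<Sum>v\<in>{n - d<..d}. (?D v)\<^sup>2) + (\<Sum>v\<in>{d<..n}. (?D v)\<^sup>2)"
    by (rule sum_greaterThanAtMost_split3) (use assms in auto)
  also have "(\<Sum>v\<in>{0<..n - d}. (?D v)\<^sup>2)
      = affine_square_sum 1 (- real d - 1) (real (n - d)) - affine_square_sum 1 (- real d - 1) (real 0)"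
    by (rule sum_affine_square) (use assms in \<open>auto simp: of_nat_diff\<close>)
  also have "(\<Sum>v\<in>{n - d<..d}. (?D v)\<^sup>2)
      = affine_square_sum 2 (- real n - 1) (real d) - affine_square_sum 2 (- real n - 1) (real (n - d))"
    by (rule sum_affine_square) (use assms in \<open>auto simp: of_nat_diff\<close>)
  also have "(\<Sum>v\<in>{d<..n}. (?D v)\<^sup>2)
      = affine_square_sum 1 (real d - real n) (real n) - affine_square_sum 1 (real d - real n) (real d)"
    by (rule sum_affine_square) (use assms in \<open>auto simp: of_nat_diff\<close>)
  finally show ?thesis
    using assms
    by (simp add: var_pos_roots_le affine_square_sum_def of_nat_diff field_simps
        power2_eq_square power3_eq_cube)
qed

theorem theoremA1:
  fixes n d :: nat
  assumes "1 \<le> d" and "d \<le> n"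
  shows "(2 * d \<le> n \<longrightarrow> var_W n (X_set (pos_roots_eq n d)) = (real n + real d) / 12)
       \<and> (2 * d \<ge> n \<longrightarrow> var_W n (X_set (pos_roots_eq n d)) = (real n - real d) / 4)
       \<and> (2 * d \<le> n \<longrightarrow> var_W n (X_set (pos_roots_le n d)) =
            (1/18) * real d ^ 3 + (1/24) * real d ^ 2 + ((1/12) * real n - 1/72) * real d)
       \<and> (2 * d \<ge> n \<longrightarrow> var_W n (X_set (pos_roots_le n d)) =
            - (1/6) * real d ^ 3 + ((1/3) * real n - 7/24) * real d ^ 2
            + (- (1/6) * real n ^ 2 + (5/12) * real n - 1/8) * real d
            + ((1/36) * real n ^ 3 - (1/12) * real n ^ 2 + (1/18) * real n))"
proof (intro conjI impI)
  assume "2 * d \<le> n"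
  then show "var_W n (X_set (pos_roots_eq n d)) = (real n + real d) / 12"
    using var_pos_roots_eq[OF assms] by (simp add: of_nat_diff)
  show "var_W n (X_set (pos_roots_le n d)) =
      (1/18) * real d ^ 3 + (1/24) * real d ^ 2 + ((1/12) * real n - 1/72) * real d"
    using \<open>2 * d \<le> n\<close> by (rule var_pos_roots_le_short)
next
  assume "n \<le> 2 * d"
  then show "var_W n (X_set (pos_roots_eq n d)) = (real n - real d) / 4"
    using var_pos_roots_eq[OF assms] assms by (simp add: of_nat_diff)
  show "var_W n (X_set (pos_roots_le n d)) =
      - (1/6) * real d ^ 3 + ((1/3) * real n - 7/24) * real d ^ 2
      + (- (1/6) * real n ^ 2 + (5/12) * real n - 1/8) * real d
      + ((1/36) * real n ^ 3 - (1/12) * real n ^ 2 + (1/18) * real n)"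
    using assms(2) \<open>n \<le> 2 * d\<close> by (rule var_pos_roots_le_long)
qed

end
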